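(* Let $\mathbb{F}_q$ be a finite field, $n\ge1$, and let $C\le \mathbb{F}_q^n$ be a linear code which is an abelian group code. Let $G$ be a regular subgroup of $S_n$ such that $\langle G, C_{S_n}(G)\rangle \le \mathrm{PAut}(C)$, and such that $C$ is permutation equivalent to some ideal of the group algebra $\mathbb{F}_q[G]$ on which the derived subgroup $G'$ acts trivially from the left (respectively, from the right). If $G'\neq\{1\}$, then there exist positive integers $s,t>1$ with $s\cdot t=n$ such that $C$ is permutation equivalent to a linear subspace of $\bigoplus_{i=1}^{s}\mathrm{Rep}_t(\mathbb{F}_q)\le\mathbb{F}_q^{st}$.
   Context: All groups are finite. $\mathcal{B}=\{e_1,\dots,e_n\}$ is the standard basis of $\mathbb{F}_q^n$. A permutation $\sigma\in S_n$ acts on $\mathbb{F}_q^n$ by $\sigma(\sum a_ie_i)=\sum a_i e_{\sigma(i)}$; two codes $C,C'\le\mathbb{F}_q^n$ are permutation equivalent if $\sigma(C)=C'$ for some $\sigma\in S_n$; $\mathrm{PAut}(C)=\{\sigma\in S_n:\sigma(C)=C\}$. A subgroup of $S_n$ is regular if it has order $n$ and acts transitively on $\{1,\dots,n\}$; $C_{S_n}(G)$ is the centralizer of $G$ in $S_n$. For a group $H$ of order $n$, $C$ is an $H$-code if there is a bijection $\phi:\mathcal{B}\to H$ whose $\mathbb{F}_q$-linear extension $\tilde\phi:\mathbb{F}_q^n\to\mathbb{F}_q[H]$ maps $C$ onto a two-sided ideal of $\mathbb{F}_q[H]$; $C$ is an abelian group code if it is an $H$-code for some abelian $H$. $C$ is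 permutation equivalent to an ideal $I$ of $\mathbb{F}_q[G]$ if there is a bijection $\phi:\mathcal{B}\to G$ with $\tilde\phi(C)=I$. A subgroup $U\le G$ acts trivially from the left (right) on $X\subseteq\mathbb{F}_q[G]$ if $ux=x$ (resp. $xu=x$) for all $u\in U,x\in X$. $\mathrm{Rep}_t(\mathbb{F}_q)=\{(\lambda,\dots,\lambda):\lambda\in\mathbb{F}_q\}\le\mathbb{F}_q^t$ is the repetition code of length $t$. *)

theory Defs
  imports "HOL-Algebra.Algebra" "HOL-Combinatorics.Permutations"
begin

text \<open>Vectors of F_q^n: functions on indices, zero outside {1..n}.
  The standard basis vector e_i corresponds to index i.\<close>

definition vecs :: "nat \<Rightarrow> (nat \<Rightarrow> 'a::field) set" where
  "vecs n = {v. \<forall>i. i \<notin> {1..n} \<longrightarrow> v i = 0}"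

definition linear_code :: "nat \<Rightarrow> (nat \<Rightarrow> 'a::field) set \<Rightarrow> bool" where
  "linear_code n C \<longleftrightarrow> C \<subseteq> vecs n \<and> (\<lambda>_. 0) \<in> C \<and>
     (\<forall>x\<in>C. \<forall>y\<in>C. (\<lambda>i. x i + y i) \<in> C) \<and>
     (\<forall>c. \<forall>x\<in>C. (\<lambda>i. c * x i) \<in> C)"

text \<open>sigma(sum a_i e_i) = sum a_i e_(sigma i), i.e. (sigma v)(j) = v(sigma^-1 j).\<close>
definition perm_vec :: "(nat \<Rightarrow> nat) \<Rightarrow> (nat \<Rightarrow> 'a) \<Rightarrow> nat \<Rightarrow> 'a" where
  "perm_vec \<sigma> v = (\<lambda>j. v (Hilbert_Choice.inv \<sigma> j))"

definition perm_equiv :: "nat \<Rightarrow> (nat \<Rightarrow> 'a) set \<Rightarrow> (nat \<Rightarrow> 'a) set \<Rightarrow> bool" where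
  "perm_equiv n C D \<longleftrightarrow> (\<exists>\<sigma>. \<sigma> permutes {1..n} \<and> perm_vec \<sigma> ` C = D)"

definition PAut :: "nat \<Rightarrow> (nat \<Rightarrow> 'a) set \<Rightarrow> (nat \<Rightarrow> nat) set" where
  "PAut n C = {\<sigma>. \<sigma> permutes {1..n} \<and> perm_vec \<sigma> ` C = C}"

definition regular_subgroup :: "nat \<Rightarrow> (nat \<Rightarrow> nat) set \<Rightarrow> bool" where
  "regular_subgroup n G \<longleftrightarrow> subgroup G (sym_group n) \<and> card G = n \<and>
     (\<forall>i\<in>{1..n}. \<forall>j\<in>{1..n}. \<exists>g\<in>G. g i = j)"

definition centralizer_Sn :: "nat \<Rightarrow> (nat \<Rightarrow> nat) set \<Rightarrow> (nat \<Rightarrow> nat) set" where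
  "centralizer_Sn n G = {\<sigma> \<in> carrier (sym_group n). \<forall>g\<in>G. \<sigma> \<circ> g = g \<circ> \<sigma>}"

text \<open>Group algebra F_q[H] of a (finite) group H: functions on the carrier
  (zero outside), with convolution product.\<close>
definition ga_elems :: "('g, 'b) monoid_scheme \<Rightarrow> ('g \<Rightarrow> 'a::field) set" where
  "ga_elems H = {x. \<forall>g. g \<notin> carrier H \<longrightarrow> x g = 0}"

definition ga_mult :: "('g, 'b) monoid_scheme \<Rightarrow> ('g \<Rightarrow> 'a::field) \<Rightarrow> ('g \<Rightarrow> 'a) \<Rightarrow> 'g \<Rightarrow> 'a" where
  "ga_mult H x y = (\<lambda>g. if g \<in> carrier H
      then (\<Sum>h\<in>carrier H. x h * y (inv\<^bsub>H\<^esub> h \<otimes>\<^bsub>H\<^esub> g)) else 0)"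

definition ga_basis :: "'g \<Rightarrow> 'g \<Rightarrow> 'a::field" where
  "ga_basis u = (\<lambda>g. if g = u then 1 else 0)"

definition two_sided_ideal :: "('g, 'b) monoid_scheme \<Rightarrow> ('g \<Rightarrow> 'a::field) set \<Rightarrow> bool" where
  "two_sided_ideal H I \<longleftrightarrow> I \<subseteq> ga_elems H \<and> (\<lambda>_. 0) \<in> I \<and>
     (\<forall>x\<in>I. \<forall>y\<in>I. (\<lambda>g. x g + y g) \<in> I) \<and>
     (\<forall>c. \<forall>x\<in>I. (\<lambda>g. c * x g) \<in> I) \<and>
     (\<forall>a\<in>ga_elems H. \<forall>x\<in>I. ga_mult H a x \<in> I \<and> ga_mult H x a \<in> I)"

definition acts_trivially_left :: "('g, 'b) monoid_scheme \<Rightarrow> 'g set \<Rightarrow> ('g \<Rightarrow> 'a::field) set \<Rightarrow> bool" where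
  "acts_trivially_left H U S \<longleftrightarrow> (\<forall>u\<in>U. \<forall>x\<in>S. ga_mult H (ga_basis u) x = x)"

definition acts_trivially_right :: "('g, 'b) monoid_scheme \<Rightarrow> 'g set \<Rightarrow> ('g \<Rightarrow> 'a::field) set \<Rightarrow> bool" where
  "acts_trivially_right H U S \<longleftrightarrow> (\<forall>u\<in>U. \<forall>x\<in>S. ga_mult H x (ga_basis u) = x)"

text \<open>Linear extension of a bijection phi : {e_1..e_n} -> H (e_i identified with i).\<close>
definition lift_map :: "nat \<Rightarrow> ('g, 'b) monoid_scheme \<Rightarrow> (nat \<Rightarrow> 'g) \<Rightarrow> (nat \<Rightarrow> 'a::field) \<Rightarrow> 'g \<Rightarrow> 'a" where
  "lift_map n H \<phi> v = (\<lambda>g. if g \<in> carrier H then v (inv_into {1..n} \<phi> g) else 0)"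

definition perm_equiv_ideal :: "nat \<Rightarrow> (nat \<Rightarrow> 'a::field) set \<Rightarrow> ('g, 'b) monoid_scheme \<Rightarrow> ('g \<Rightarrow> 'a) set \<Rightarrow> bool" where
  "perm_equiv_ideal n C H I \<longleftrightarrow>
     (\<exists>\<phi>. bij_betw \<phi> {1..n} (carrier H) \<and> lift_map n H \<phi> ` C = I)"

definition is_group_code :: "nat \<Rightarrow> ('g, 'b) monoid_scheme \<Rightarrow> (nat \<Rightarrow> 'a::field) set \<Rightarrow> bool" where
  "is_group_code n H C \<longleftrightarrow> card (carrier H) = n \<and>
     (\<exists>I. two_sided_ideal H I \<and> perm_equiv_ideal n C H I)"

text \<open>Abelian group code: an H-code for some finite abelian group H (up to isomorphism
  every group of order n has carrier inside nat, so it suffices to range over nat groups).\<close>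
definition abelian_group_code :: "nat \<Rightarrow> (nat \<Rightarrow> 'a::field) set \<Rightarrow> bool" where
  "abelian_group_code n C \<longleftrightarrow> (\<exists>H :: nat monoid. comm_group H \<and> is_group_code n H C)"

text \<open>Direct sum of s copies of Rep_t inside F^(st): constant on consecutive blocks.\<close>
definition rep_sum :: "nat \<Rightarrow> nat \<Rightarrow> (nat \<Rightarrow> 'a::field) set" where
  "rep_sum s t = {v \<in> vecs (s * t). \<forall>i<s. \<forall>j\<in>{1..t}. \<forall>k\<in>{1..t}. v (i * t + j) = v (i * t + k)}"

end

theory Submission
  imports Defs
begin

text \<open>If an ideal of \<open>\<bbbF>\<^sub>q[G]\<close> is fixed by left (or right) multiplication with the
  elements of a normal subgroup \<open>U\<close>, each of its elements is constant on the right cosets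
  \<open>U g\<close>, hence on the right cosets of any subgroup \<open>K \<le> U\<close>. When \<open>G' \<noteq> 1\<close>, a
  nontrivial cyclic subgroup \<open>K\<close> of \<open>G'\<close> is proper in \<open>G\<close>, because \<open>G\<close> is not abelian.
  Listing the coordinates coset by coset turns \<open>C\<close> into a code constant on \<open>[G:K]\<close>
  consecutive blocks of length \<open>|K|\<close>.\<close>

lemma (in group) ga_mult_basis_left:
  assumes "finite (carrier G)" "u \<in> carrier G" "g \<in> carrier G"
  shows "ga_mult G (ga_basis u) x g = x (inv u \<otimes> g)"
proof -
  have "ga_mult G (ga_basis u) x g = (\<Sum>h\<in>carrier G. if h = u then x (inv h \<otimes> g) else 0)"
    using assms(3) by (auto simp: ga_mult_def ga_basis_def intro: sum.cong)
  then show ?thesis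
    using assms by simp
qed

lemma (in group) ga_mult_basis_right:
  assumes "finite (carrier G)" "u \<in> carrier G" "g \<in> carrier G"
  shows "ga_mult G x (ga_basis u) g = x (g \<otimes> inv u)"
proof -
  have "inv h \<otimes> g = u \<longleftrightarrow> h = g \<otimes> inv u" if "h \<in> carrier G" for h
    using that assms by (metis inv_solve_left inv_solve_right)
  then have "ga_mult G x (ga_basis u) g = (\<Sum>h\<in>carrier G. if h = g \<otimes> inv u then x h else 0)"
    using assms(3) by (auto simp: ga_mult_def ga_basis_def intro: sum.cong)
  then show ?thesis
    using assms by simp
qed

lemma (in group) left_translation_invariant_if_acts_trivially_left:
  assumes "finite (carrier G)" "acts_trivially_left G U I" "U \<subseteq> carrier G"
    and "x \<in> I" "k \<in> U" "h \<in> carrier G"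
  shows "x (k \<otimes> h) = x h"
proof -
  have "x (inv k \<otimes> (k \<otimes> h)) = x (k \<otimes> h)"
    using assms ga_mult_basis_left[of k "k \<otimes> h" x] by (auto simp: acts_trivially_left_def)
  then show ?thesis
    using assms by (simp add: m_assoc[symmetric] subsetD)
qed

lemma (in group) left_translation_invariant_if_acts_trivially_right:
  assumes "finite (carrier G)" "acts_trivially_right G U I" "U \<lhd> G"
    and "x \<in> I" "k \<in> U" "h \<in> carrier G"
  shows "x (k \<otimes> h) = x h"
proof -
  interpret U: normal U G by fact
  define u where "u = inv (inv h \<otimes> k \<otimes> h)"
  have "inv h \<otimes> k \<otimes> inv (inv h) \<in> U"
    using assms U.inv_op_closed2 inv_closed by blast
  then have "u \<in> U"
    using assms by (simp add: u_def)
  then have "x (h \<otimes> inv u) = x h"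
    using assms ga_mult_basis_right[of u h x] by (auto simp: acts_trivially_right_def)
  moreover have "h \<otimes> inv u = k \<otimes> h"
    using assms by (simp add: u_def m_assoc[symmetric])
  ultimately show ?thesis by simp
qed

lemma (in group) left_translation_invariant_if_acts_trivially:
  assumes "finite (carrier G)" "U \<lhd> G"
    and "acts_trivially_left G U I \<or> acts_trivially_right G U I"
    and "x \<in> I" "k \<in> U" "h \<in> carrier G"
  shows "x (k \<otimes> h) = x h"
  using assms(3)
proof
  assume "acts_trivially_left G U I"
  moreover have "U \<subseteq> carrier G"
    using assms(2) normal_imp_subgroup subgroup.subset by blast
  ultimately show ?thesis
    using left_translation_invariant_if_acts_trivially_left assms by blast
next
  assume "acts_trivially_right G U I"
  then show ?thesis
    using left_translation_invariant_if_acts_trivially_right assms by blast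
qed

lemma (in group) derived_contains_proper_nontrivial_subgroup:
  assumes "finite (carrier G)" "derived G (carrier G) \<noteq> {\<one>}"
  obtains K where "subgroup K G" "K \<subseteq> derived G (carrier G)" "1 < card K" "card K < order G"
proof -
  have derived_sub: "subgroup (derived G (carrier G)) G"
    using normal_imp_subgroup[OF derived_self_is_normal] .
  then obtain u where u: "u \<in> derived G (carrier G)" "u \<noteq> \<one>"
    using assms(2) subgroup.one_closed by blast
  then have u_carrier: "u \<in> carrier G"
    using derived_sub subgroup.subset by blast
  define K where "K = generate G {u}"
  have K_sub: "subgroup K G"
    using u_carrier by (simp add: K_def generate_is_subgroup)
  have "K \<subseteq> derived G (carrier G)"
    using derived_sub u by (simp add: K_def generate_subgroup_incl)
  moreover have "1 < card K"
  proof -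
    have "{u, \<one>} \<subseteq> K"
      by (simp add: K_def generate.incl generate.one)
    moreover have "finite K"
      using assms(1) subgroup.subset[OF K_sub] finite_subset by blast
    ultimately have "card {u, \<one>} \<le> card K"
      by (rule card_mono[rotated])
    then show ?thesis
      using u(2) by simp
  qed
  moreover have "K \<noteq> carrier G"
  proof
    assume "K = carrier G"
    then have "cyclic_group G"
      using u_carrier by (auto simp: cyclic_group K_def generate_pow full_SetCompr_eq)
    then have "comm_group G"
      by (rule cyclic_imp_abelian_group)
    then show False
      using assms(2) comm_group.derived_eq_singleton by blast
  qed
  then have "card K < order G"
    using K_sub assms(1) subgroup.subset
    by (metis order_def psubsetI psubset_card_mono)
  ultimately show ?thesis
    using K_sub that by blast
qed

lemma linear_code_perm_vec:
  assumes "linear_code n C" "\<sigma> permutes {1..n}"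
  shows "linear_code n (perm_vec \<sigma> ` C)"
proof -
  have pv: "perm_vec \<sigma> v = v \<circ> Hilbert_Choice.inv \<sigma>" for v :: "nat \<Rightarrow> 'a"
    by (simp add: perm_vec_def comp_def)
  have inv_fixes: "Hilbert_Choice.inv \<sigma> i = i" if "i \<notin> {1..n}" for i
    using permutes_inv[OF assms(2)] that by (simp add: permutes_def)
  show ?thesis
    unfolding linear_code_def
  proof (intro conjI ballI allI subsetI)
    fix w assume "w \<in> perm_vec \<sigma> ` C"
    then show "w \<in> vecs n"
      using assms(1) inv_fixes by (auto simp: linear_code_def vecs_def pv subset_iff)
  next
    show "(\<lambda>_. 0) \<in> perm_vec \<sigma> ` C"
      using assms(1) by (force simp: linear_code_def pv)
  next
    fix x y assume "x \<in> perm_vec \<sigma> ` C" "y \<in> perm_vec \<sigma> ` C"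
    then show "(\<lambda>i. x i + y i) \<in> perm_vec \<sigma> ` C"
      using assms(1) by (force simp: linear_code_def pv)
  next
    fix c x assume "x \<in> perm_vec \<sigma> ` C"
    then show "(\<lambda>i. c * x i) \<in> perm_vec \<sigma> ` C"
      using assms(1) by (force simp: linear_code_def pv)
  qed
qed

lemma perm_equiv_subset_rep_sum:
  assumes "linear_code (s * t) C" "\<tau> permutes {1..s * t}"
    and "\<And>v i j k. v \<in> C \<Longrightarrow> i < s \<Longrightarrow> j \<in> {1..t} \<Longrightarrow> k \<in> {1..t} \<Longrightarrow>
           v (\<tau> (i * t + j)) = v (\<tau> (i * t + k))"
  shows "\<exists>D. linear_code (s * t) D \<and> D \<subseteq> rep_sum s t \<and> perm_equiv (s * t) C D"
proof (intro exI conjI)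
  define \<sigma> where "\<sigma> = Hilbert_Choice.inv \<tau>"
  have \<sigma>: "\<sigma> permutes {1..s * t}"
    using permutes_inv[OF assms(2)] by (simp add: \<sigma>_def)
  have pv: "perm_vec \<sigma> v = v \<circ> \<tau>" for v :: "nat \<Rightarrow> 'a"
    using permutes_inv_inv[OF assms(2)] by (simp add: perm_vec_def \<sigma>_def comp_def)
  show lin: "linear_code (s * t) (perm_vec \<sigma> ` C)"
    using linear_code_perm_vec[OF assms(1) \<sigma>] .
  show "perm_vec \<sigma> ` C \<subseteq> rep_sum s t"
    using lin assms(3) by (auto simp: rep_sum_def linear_code_def pv)
  show "perm_equiv (s * t) C (perm_vec \<sigma> ` C)"
    using \<sigma> by (auto simp: perm_equiv_def)
qed

lemma block_index_in_range:
  fixes i j s t :: nat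
  assumes "i < s" "j \<in> {1..t}"
  shows "i * t + j \<in> {1..s * t}"
proof -
  have "i * t + j \<le> i * t + t"
    using assms(2) by simp
  also have "\<dots> \<le> s * t"
    using assms(1) by (metis Suc_leI add.commute mult_Suc mult_le_mono1)
  finally show ?thesis
    using assms(2) by simp
qed

lemma block_index_div:
  fixes i j t :: nat
  assumes "j \<in> {1..t}"
  shows "(i * t + j - 1) div t = i"
  using assms by (intro div_nat_eqI) (auto simp: algebra_simps)

lemma blockwise_enumeration:
  assumes "finite A" "\<Union>P = A" "pairwise disjnt P" "\<And>c. c \<in> P \<Longrightarrow> card c = t" "t > 0"
  obtains \<psi> where "bij_betw \<psi> {1..card P * t} A"
    and "\<And>i. i < card P \<Longrightarrow> \<exists>c\<in>P. \<forall>j\<in>{1..t}. \<psi> (i * t + j) \<in> c"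
proof -
  define s where "s = card P"
  have "finite P"
    using assms(1,2) finite_UnionD by blast
  then obtain e where e: "bij_betw e {0..<s} P"
    using ex_bij_betw_nat_finite s_def by blast
  have finite_blocks: "finite c" if "c \<in> P" for c
    using that assms(1,2) by (metis Union_upper finite_subset)
  have "\<exists>f. bij_betw f {0..<t} c" if "c \<in> P" for c
    using that assms(4) finite_blocks ex_bij_betw_nat_finite[of c] by metis
  then obtain f where f: "\<And>c. c \<in> P \<Longrightarrow> bij_betw (f c) {0..<t} c"
    by metis
  define \<psi> where "\<psi> m = f (e ((m - 1) div t)) ((m - 1) mod t)" for m
  have block_in_P: "e ((m - 1) div t) \<in> P" if "m \<in> {1..s * t}" for m
    using that assms(5) e by (auto simp: bij_betw_def less_mult_imp_div_less)
  have \<psi>_in_block: "\<psi> m \<in> e ((m - 1) div t)" if "m \<in> {1..s * t}" for m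
    using f[OF block_in_P[OF that]] assms(5) by (auto simp: \<psi>_def bij_betw_def)
  have "inj_on \<psi> {1..s * t}"
  proof (rule inj_onI)
    fix m m' assume m: "m \<in> {1..s * t}" and m': "m' \<in> {1..s * t}" and eq: "\<psi> m = \<psi> m'"
    have "e ((m - 1) div t) = e ((m' - 1) div t)"
      using \<psi>_in_block[OF m] \<psi>_in_block[OF m'] eq pairwiseD[OF assms(3) block_in_P[OF m] block_in_P[OF m']]
      by (auto simp: disjnt_iff)
    then have div_eq: "(m - 1) div t = (m' - 1) div t"
      using e m m' assms(5) by (auto simp: bij_betw_def inj_on_def less_mult_imp_div_less)
    then have "(m - 1) mod t = (m' - 1) mod t"
      using eq f[OF block_in_P[OF m]] assms(5) by (auto simp: \<psi>_def bij_betw_def inj_on_def)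
    then have "m - 1 = m' - 1"
      using div_eq by (metis div_mult_mod_eq)
    then show "m = m'"
      using m m' by auto
  qed
  moreover have "\<psi> ` {1..s * t} \<subseteq> A"
    using \<psi>_in_block block_in_P assms(2) by blast
  moreover have "card A = s * t"
    using card_Union_disjoint[OF assms(3) finite_blocks] assms(2,4) by (simp add: s_def)
  ultimately have "bij_betw \<psi> {1..s * t} A"
    using assms(1) by (simp add: bij_betw_def card_image card_subset_eq)
  moreover have "\<exists>c\<in>P. \<forall>j\<in>{1..t}. \<psi> (i * t + j) \<in> c" if "i < s" for i
  proof
    show "e i \<in> P"
      using that e by (auto simp: bij_betw_def)
    show "\<forall>j\<in>{1..t}. \<psi> (i * t + j) \<in> e i"
    proof
      fix j assume j: "j \<in> {1..t}"
      show "\<psi> (i * t + j) \<in> e i"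
        using \<psi>_in_block[OF block_index_in_range[OF that j]] unfolding block_index_div[OF j] .
    qed
  qed
  ultimately show ?thesis
    using that s_def by blast
qed

lemma perm_equiv_subset_rep_sum_of_partition:
  assumes "linear_code n C" "bij_betw \<phi> {1..n} A"
    and "\<Union>P = A" "pairwise disjnt P" "\<And>c. c \<in> P \<Longrightarrow> card c = t" "t > 0"
    and "\<And>v c a b. v \<in> C \<Longrightarrow> c \<in> P \<Longrightarrow> a \<in> c \<Longrightarrow> b \<in> c \<Longrightarrow>
           v (inv_into {1..n} \<phi> a) = v (inv_into {1..n} \<phi> b)"
  shows "\<exists>D. linear_code n D \<and> D \<subseteq> rep_sum (card P) t \<and> perm_equiv n C D"
proof -
  have "finite A"
    using assms(2) bij_betw_finite by blast
  then obtain \<psi> where \<psi>: "bij_betw \<psi> {1..card P * t} A"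
    and blocks: "\<And>i. i < card P \<Longrightarrow> \<exists>c\<in>P. \<forall>j\<in>{1..t}. \<psi> (i * t + j) \<in> c"
    using blockwise_enumeration[OF _ assms(3-6)] by blast
  have n: "n = card P * t"
    using bij_betw_same_card[OF assms(2)] bij_betw_same_card[OF \<psi>] by simp
  define \<tau> where "\<tau> m = (if m \<in> {1..n} then inv_into {1..n} \<phi> (\<psi> m) else m)" for m
  have "bij_betw (inv_into {1..n} \<phi> \<circ> \<psi>) {1..n} {1..n}"
    using bij_betw_trans[OF _ bij_betw_inv_into[OF assms(2)]] \<psi> n by simp
  then have "bij_betw \<tau> {1..n} {1..n}"
    by (rule bij_betw_cong[THEN iffD1, rotated]) (simp add: \<tau>_def)
  then have \<tau>: "\<tau> permutes {1..card P * t}"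
    using n by (intro bij_imp_permutes) (auto simp: \<tau>_def)
  have "v (\<tau> (i * t + j)) = v (\<tau> (i * t + k))"
    if "v \<in> C" "i < card P" "j \<in> {1..t}" "k \<in> {1..t}" for v i j k
    using blocks[OF that(2)] that assms(7) block_index_in_range[OF that(2)] n
    by (auto simp: \<tau>_def)
  then show ?thesis
    using perm_equiv_subset_rep_sum[of "card P" t C \<tau>] assms(1) \<tau> n by blast
qed

lemma (in group) perm_equiv_subset_rep_sum_of_subgroup:
  assumes "linear_code n C" "bij_betw \<phi> {1..n} (carrier G)" "subgroup K G"
    and "\<And>v k h. v \<in> C \<Longrightarrow> k \<in> K \<Longrightarrow> h \<in> carrier G \<Longrightarrow>
           v (inv_into {1..n} \<phi> (k \<otimes> h)) = v (inv_into {1..n} \<phi> h)"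
  shows "\<exists>D. linear_code n D \<and> D \<subseteq> rep_sum (card (rcosets K)) (card K) \<and> perm_equiv n C D"
proof (rule perm_equiv_subset_rep_sum_of_partition[OF assms(1,2)])
  show "\<Union>(rcosets K) = carrier G" "pairwise disjnt (rcosets K)"
    using rcosets_part_G rcos_disjoint assms(3) by auto
  show "card c = card K" if "c \<in> rcosets K" for c
    using card_rcosets_equal[OF that] assms(3) subgroup.subset by metis
  have "finite (carrier G)"
    using assms(2) bij_betw_finite by blast
  then have "finite K"
    using subgroup.subset[OF assms(3)] finite_subset by blast
  then show "card K > 0"
    using assms(3) subgroup.one_closed card_gt_0_iff by blast
  fix v c a b assume "v \<in> C" "c \<in> rcosets K" "a \<in> c" "b \<in> c"
  then obtain g k k' where "g \<in> carrier G" "k \<in> K" "k' \<in> K" "a = k \<otimes> g" "b = k' \<otimes> g"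
    by (auto simp: RCOSETS_def r_coset_def)
  then show "v (inv_into {1..n} \<phi> a) = v (inv_into {1..n} \<phi> b)"
    using assms(4) \<open>v \<in> C\<close> by metis
qed

theorem corollary2:
  fixes C :: "(nat \<Rightarrow> 'a::{field,finite}) set" and n :: nat and G :: "(nat \<Rightarrow> nat) set"
  assumes "n \<ge> 1"
    and "linear_code n C"
    and "abelian_group_code n C"
    and "regular_subgroup n G"
    and "generate (sym_group n) (G \<union> centralizer_Sn n G) \<subseteq> PAut n C"
    and "\<exists>I. two_sided_ideal ((sym_group n)\<lparr>carrier := G\<rparr>) I
             \<and> perm_equiv_ideal n C ((sym_group n)\<lparr>carrier := G\<rparr>) I
             \<and> (acts_trivially_left ((sym_group n)\<lparr>carrier := G\<rparr>) (derived (sym_group n) G) I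
                \<or> acts_trivially_right ((sym_group n)\<lparr>carrier := G\<rparr>) (derived (sym_group n) G) I)"
    and "derived (sym_group n) G \<noteq> {id}"
  shows "\<exists>s t. s > 1 \<and> t > 1 \<and> s * t = n \<and>
           (\<exists>D. linear_code n D \<and> D \<subseteq> rep_sum s t \<and> perm_equiv n C D)"
proof -
  define H where "H = (sym_group n)\<lparr>carrier := G\<rparr>"
  have G_sub: "subgroup G (sym_group n)" and card_G: "card G = n"
    using assms(4) by (auto simp: regular_subgroup_def)
  interpret H: group H
    unfolding H_def by (rule subgroup.subgroup_is_group[OF G_sub sym_group_is_group])
  have carrier_H: "carrier H = G" and one_H: "\<one>\<^bsub>H\<^esub> = id"
    by (simp_all add: H_def sym_group_def)
  have finite_H: "finite (carrier H)"
    using card_G assms(1) carrier_H card_ge_0_finite by force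
  define U where "U = derived H (carrier H)"
  have U_eq: "derived (sym_group n) G = U"
    using group.derived_consistent[OF sym_group_is_group order.refl G_sub]
    by (simp add: U_def H_def)
  obtain I where "perm_equiv_ideal n C H I"
    and trivial: "acts_trivially_left H U I \<or> acts_trivially_right H U I"
    using assms(6) unfolding H_def[symmetric] U_eq by blast
  then obtain \<phi> where \<phi>: "bij_betw \<phi> {1..n} (carrier H)" "lift_map n H \<phi> ` C = I"
    unfolding perm_equiv_ideal_def by blast
  obtain K where K: "subgroup K H" "K \<subseteq> U" "1 < card K" "card K < n"
    using H.derived_contains_proper_nontrivial_subgroup[OF finite_H] assms(7) U_eq one_H card_G
    by (metis U_def carrier_H order_def)
  have "v (inv_into {1..n} \<phi> (k \<otimes>\<^bsub>H\<^esub> h)) = v (inv_into {1..n} \<phi> h)"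
    if "v \<in> C" "k \<in> K" "h \<in> carrier H" for v k h
    using H.left_translation_invariant_if_acts_trivially[OF finite_H _ trivial, of "lift_map n H \<phi> v" k h]
      H.derived_self_is_normal \<phi>(2) that K(2) subgroup.mem_carrier[OF K(1)]
    by (auto simp: lift_map_def U_def)
  then have "\<exists>D. linear_code n D \<and> D \<subseteq> rep_sum (card (rcosets\<^bsub>H\<^esub> K)) (card K) \<and> perm_equiv n C D"
    using H.perm_equiv_subset_rep_sum_of_subgroup[OF assms(2) \<phi>(1) K(1)] by blast
  moreover have "card (rcosets\<^bsub>H\<^esub> K) * card K = n"
    using H.lagrange[OF K(1)] card_G carrier_H by (simp add: order_def)
  ultimately show ?thesis
    using K(3,4) mult_less_cancel2[of 1 "card K" "card (rcosets\<^bsub>H\<^esub> K)"] by auto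
qed

end
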